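(* Let $P$ be a 6-stack. If $Q$ is a proper retract of $P$ which (with the induced order) is isomorphic to a tower of sections, then $Q$ is a 4-tower.
   Context: All posets are finite. For a poset $P$ and $p\in P$, the rank $r(p)$ of $p$ is the largest $m$ such that there is a chain $p_0<\dots<p_m=p$ in $P$. $P$ is ranked of rank $r(P)$ if every maximal chain has exactly $r(P)+1$ elements. For $0\le i\le j$, $P(i,j)=\{p\in P:i\le r(p)\le j\}$, $P(i)=P(i,i)$ (induced order). A subset $Q\subseteq P$ (induced order) is a retract of $P$ if there is an order-preserving $f:P\to Q$ with $f(q)=q$ for all $q\in Q$; it is proper if $Q\ne P$. The 6-crown $C_6$ is the poset on $\{x_0,x_1,x_2,y_0,y_1,y_2\}$ whose only strict comparabilities are $x_0<y_0>x_1<y_1>x_2<y_2>x_0$. A 6-stack is a ranked poset $P$ of rank $n\ge1$ such that $P(i,i+1)\cong C_6$ for each $0\le i<n$. The ordinal sum of posets $P_1,\dots,P_k$ ($k\ge1$) is their disjoint union ordered by the orders of the $P_i$ together with $p<q$ whenever $p\in P_i,q\in P_j,i<j$. A 4-tower is an ordinal sum of one or more two-element antichains. A section is either a two-element antichain or a poset on the set $\{[i,k]: 0\le i\le 2,\ 0\le k\le n\}$ (with $3(n+1)$ distinct elements), for some $n\ge 1$, such that: (1) $[i,k]<[i,l]$ whenever $0\le k<l\le n$; (2) for each $k$, $\{[0,k],[1,k],[2,k]\}$ is an antichain; (3) $[i,k]<[j,l]$ implies $[i+1,k]<[j+1,l]$ (first indices mod $3$); (4) for each $0\le k<n$ there are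 $i,j$ with $[i,k]\not<[j,k+1]$. A tower of sections is an ordinal sum of one or more sections. *)

theory Defs
  imports Main
begin

definition poset_on :: "'a set \<Rightarrow> ('a \<Rightarrow> 'a \<Rightarrow> bool) \<Rightarrow> bool" where
  "poset_on S le \<longleftrightarrow> finite S \<and>
     (\<forall>x\<in>S. le x x) \<and>
     (\<forall>x\<in>S. \<forall>y\<in>S. le x y \<and> le y x \<longrightarrow> x = y) \<and>
     (\<forall>x\<in>S. \<forall>y\<in>S. \<forall>z\<in>S. le x y \<and> le y z \<longrightarrow> le x z)"

definition lt :: "('a \<Rightarrow> 'a \<Rightarrow> bool) \<Rightarrow> 'a \<Rightarrow> 'a \<Rightarrow> bool" where
  "lt le x y \<longleftrightarrow> le x y \<and> x \<noteq> y"

definition rank :: "'a set \<Rightarrow> ('a \<Rightarrow> 'a \<Rightarrow> bool) \<Rightarrow> 'a \<Rightarrow> nat" where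
  "rank S le p = (GREATEST m. \<exists>xs. length xs = Suc m \<and> set xs \<subseteq> S \<and>
                     sorted_wrt (lt le) xs \<and> last xs = p)"

definition is_chain :: "'a set \<Rightarrow> ('a \<Rightarrow> 'a \<Rightarrow> bool) \<Rightarrow> 'a set \<Rightarrow> bool" where
  "is_chain S le C \<longleftrightarrow> C \<subseteq> S \<and> (\<forall>x\<in>C. \<forall>y\<in>C. le x y \<or> le y x)"

definition maximal_chain :: "'a set \<Rightarrow> ('a \<Rightarrow> 'a \<Rightarrow> bool) \<Rightarrow> 'a set \<Rightarrow> bool" where
  "maximal_chain S le C \<longleftrightarrow> is_chain S le C \<and>
     (\<forall>D. is_chain S le D \<and> C \<subseteq> D \<longrightarrow> D = C)"

definition ranked_of_rank :: "'a set \<Rightarrow> ('a \<Rightarrow> 'a \<Rightarrow> bool) \<Rightarrow> nat \<Rightarrow> bool" where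
  "ranked_of_rank S le n \<longleftrightarrow> poset_on S le \<and>
     (\<forall>C. maximal_chain S le C \<longrightarrow> card C = Suc n)"

definition levels :: "'a set \<Rightarrow> ('a \<Rightarrow> 'a \<Rightarrow> bool) \<Rightarrow> nat \<Rightarrow> nat \<Rightarrow> 'a set" where
  "levels S le i j = {p\<in>S. i \<le> rank S le p \<and> rank S le p \<le> j}"

definition order_iso :: "'a set \<Rightarrow> ('a \<Rightarrow> 'a \<Rightarrow> bool) \<Rightarrow> 'b set \<Rightarrow> ('b \<Rightarrow> 'b \<Rightarrow> bool) \<Rightarrow> bool" where
  "order_iso S le T le' \<longleftrightarrow> (\<exists>f. bij_betw f S T \<and>
     (\<forall>x\<in>S. \<forall>y\<in>S. le x y \<longleftrightarrow> le' (f x) (f y)))"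

(* The 6-crown: x_i = i, y_i = 3 + i (i = 0,1,2); x_i < y_i and x_{i+1 mod 3} < y_i *)
definition crown6 :: "nat set" where "crown6 = {0..5}"

definition crown6_le :: "nat \<Rightarrow> nat \<Rightarrow> bool" where
  "crown6_le a b \<longleftrightarrow> a = b \<or>
     (a < 3 \<and> 3 \<le> b \<and> (a = b - 3 \<or> a = (b - 3 + 1) mod 3))"

definition six_stack :: "'a set \<Rightarrow> ('a \<Rightarrow> 'a \<Rightarrow> bool) \<Rightarrow> bool" where
  "six_stack S le \<longleftrightarrow> (\<exists>n\<ge>1. ranked_of_rank S le n \<and>
     (\<forall>i<n. order_iso (levels S le i (Suc i)) le crown6 crown6_le))"

definition retract :: "'a set \<Rightarrow> ('a \<Rightarrow> 'a \<Rightarrow> bool) \<Rightarrow> 'a set \<Rightarrow> bool" where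
  "retract P le Q \<longleftrightarrow> Q \<subseteq> P \<and> (\<exists>f. (\<forall>x\<in>P. f x \<in> Q) \<and>
     (\<forall>x\<in>P. \<forall>y\<in>P. le x y \<longrightarrow> le (f x) (f y)) \<and> (\<forall>q\<in>Q. f q = q))"

definition two_antichain :: "'a set \<Rightarrow> ('a \<Rightarrow> 'a \<Rightarrow> bool) \<Rightarrow> bool" where
  "two_antichain S le \<longleftrightarrow> card S = 2 \<and> (\<forall>x\<in>S. \<forall>y\<in>S. le x y \<longrightarrow> x = y)"

definition ordinal_sum_of ::
  "('a set \<Rightarrow> ('a \<Rightarrow> 'a \<Rightarrow> bool) \<Rightarrow> bool) \<Rightarrow> 'a set \<Rightarrow> ('a \<Rightarrow> 'a \<Rightarrow> bool) \<Rightarrow> bool" where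
  "ordinal_sum_of PP S le \<longleftrightarrow> (\<exists>k\<ge>1. \<exists>B :: nat \<Rightarrow> 'a set.
      S = (\<Union>i<k. B i) \<and>
      (\<forall>i<k. \<forall>j<k. i \<noteq> j \<longrightarrow> B i \<inter> B j = {}) \<and>
      (\<forall>i<k. PP (B i) le) \<and>
      (\<forall>i<k. \<forall>j<k. i < j \<longrightarrow> (\<forall>x\<in>B i. \<forall>y\<in>B j. le x y \<and> \<not> le y x)))"

definition four_tower :: "'a set \<Rightarrow> ('a \<Rightarrow> 'a \<Rightarrow> bool) \<Rightarrow> bool" where
  "four_tower S le \<longleftrightarrow> poset_on S le \<and> ordinal_sum_of two_antichain S le"

definition section_carrier :: "nat \<Rightarrow> (nat \<times> nat) set" where
  "section_carrier n = {0..2} \<times> {0..n}"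

definition section_poset :: "nat \<Rightarrow> (nat \<times> nat \<Rightarrow> nat \<times> nat \<Rightarrow> bool) \<Rightarrow> bool" where
  "section_poset n R \<longleftrightarrow> n \<ge> 1 \<and> poset_on (section_carrier n) R \<and>
     (\<forall>i\<le>2. \<forall>k l. k < l \<and> l \<le> n \<longrightarrow> lt R (i,k) (i,l)) \<and>
     (\<forall>k\<le>n. \<forall>i\<le>2. \<forall>j\<le>2. R (i,k) (j,k) \<longrightarrow> i = j) \<and>
     (\<forall>i\<le>2. \<forall>j\<le>2. \<forall>k\<le>n. \<forall>l\<le>n.
        lt R (i,k) (j,l) \<longrightarrow> lt R ((i+1) mod 3, k) ((j+1) mod 3, l)) \<and>
     (\<forall>k<n. \<exists>i\<le>2. \<exists>j\<le>2. \<not> lt R (i,k) (j, Suc k))"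

definition is_section :: "'a set \<Rightarrow> ('a \<Rightarrow> 'a \<Rightarrow> bool) \<Rightarrow> bool" where
  "is_section S le \<longleftrightarrow> two_antichain S le \<or>
     (\<exists>n R. section_poset n R \<and> order_iso S le (section_carrier n) R)"

definition tower_of_sections :: "'a set \<Rightarrow> ('a \<Rightarrow> 'a \<Rightarrow> bool) \<Rightarrow> bool" where
  "tower_of_sections S le \<longleftrightarrow> poset_on S le \<and> ordinal_sum_of is_section S le"

end

theory Submission
  imports Defs
begin

text \<open>
  In a 6-stack every rank level is a 3-element antichain, points two levels apart are
  comparable, and between consecutive levels the incomparable pairs form a perfect matching.
  Hence every 3-element antichain is a whole level, and a section block of the tower, being
  a stack of such antichains, fills a whole interval of levels \<open>a..c\<close>.

  Suppose \<open>c < N\<close>. Points of \<open>Q\<close> above the block lie above all of level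
  \<open>c\<close>, and each has an incomparable partner in \<open>Q\<close> that is also above the
  block. Let \<open>u\<close> be such a point of least level and \<open>u'\<close> its partner. No
  point of \<open>Q\<close> sits on level \<open>c + 1\<close>, so \<open>u\<close> and
  \<open>u'\<close> have a common lower bound \<open>w\<close> there. As \<open>w\<close> lies
  above two points of level \<open>c\<close>, which the retraction \<open>f\<close> fixes,
  \<open>f w\<close> lies in \<open>Q\<close> above level \<open>c\<close> and below \<open>u\<close>; so
  \<open>f w = u \<le> u'\<close>, a contradiction. Dually \<open>a = 0\<close>, so
  \<open>Q\<close> would contain all of \<open>P\<close>. Therefore all blocks are 2-antichains.
\<close>

lemma card_3_two_satisfy:
  assumes "card A = 3" and "\<And>a b. a \<in> A \<Longrightarrow> b \<in> A \<Longrightarrow> \<not> \<Phi> a \<Longrightarrow> \<not> \<Phi> b \<Longrightarrow> a = b"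
  shows "\<exists>a\<in>A. \<exists>b\<in>A. a \<noteq> b \<and> \<Phi> a \<and> \<Phi> b"
proof -
  obtain x y z where A: "A = {x, y, z}" "x \<noteq> y" "y \<noteq> z" "x \<noteq> z"
    using card_3_iff[THEN iffD1, OF assms(1)] by blast
  have "\<Phi> x \<and> \<Phi> y \<or> \<Phi> x \<and> \<Phi> z \<or> \<Phi> y \<and> \<Phi> z"
    using assms(2)[of x y] assms(2)[of x z] assms(2)[of y z] A by blast
  then show ?thesis using A by blast
qed

lemma card_3_common_satisfy:
  assumes "card A = 3"
    and "\<And>a b. a \<in> A \<Longrightarrow> b \<in> A \<Longrightarrow> \<not> \<Phi> a \<Longrightarrow> \<not> \<Phi> b \<Longrightarrow> a = b"
    and "\<And>a b. a \<in> A \<Longrightarrow> b \<in> A \<Longrightarrow> \<not> \<Psi> a \<Longrightarrow> \<not> \<Psi> b \<Longrightarrow> a = b"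
  shows "\<exists>a\<in>A. \<Phi> a \<and> \<Psi> a"
proof -
  obtain x y z where A: "A = {x, y, z}" "x \<noteq> y" "y \<noteq> z" "x \<noteq> z"
    using card_3_iff[THEN iffD1, OF assms(1)] by blast
  have "\<Phi> x \<and> \<Psi> x \<or> \<Phi> y \<and> \<Psi> y \<or> \<Phi> z \<and> \<Psi> z"
    using assms(2)[of x y] assms(2)[of x z] assms(2)[of y z]
      assms(3)[of x y] assms(3)[of x z] assms(3)[of y z] A by blast
  then show ?thesis using A by blast
qed

lemma bij_betw_ex1_iff:
  assumes "bij_betw h A B"
  shows "(\<exists>!x. x \<in> A \<and> \<Phi> (h x)) \<longleftrightarrow> (\<exists>!y. y \<in> B \<and> \<Phi> y)"
  using assms unfolding bij_betw_def inj_on_def by blast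

lemma bij_betw_restrict_Un:
  assumes "bij_betw h (A \<union> B) (C \<union> D)" and "h ` A \<subseteq> C" and "h ` B \<subseteq> D" and "C \<inter> D = {}"
  shows "bij_betw h A C" and "bij_betw h B D"
proof -
  have "h ` A \<union> h ` B = C \<union> D" using assms(1) unfolding bij_betw_def by auto
  then have "h ` A = C" "h ` B = D" using assms(2-4) by blast+
  then show "bij_betw h A C" "bij_betw h B D" by (auto intro: bij_betw_subset[OF assms(1)])
qed

lemma order_iso_sym:
  assumes "order_iso S le T le'"
  shows "order_iso T le' S le"
proof -
  obtain f where f: "bij_betw f S T" and f_le: "\<forall>x\<in>S. \<forall>y\<in>S. le x y \<longleftrightarrow> le' (f x) (f y)"
    using assms unfolding order_iso_def by blast
  let ?g = "inv_into S f"
  have "bij_betw ?g T S" using f by (rule bij_betw_inv_into)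
  moreover have "le' u v \<longleftrightarrow> le (?g u) (?g v)" if "u \<in> T" "v \<in> T" for u v
    using f_le bij_betw_inv_into_right[OF f] bij_betw_apply[OF \<open>bij_betw ?g T S\<close>] that by metis
  ultimately show ?thesis unfolding order_iso_def by blast
qed

lemma sorted_wrt_mem_cases:
  "sorted_wrt R xs \<Longrightarrow> a \<in> set xs \<Longrightarrow> b \<in> set xs \<Longrightarrow> a = b \<or> R a b \<or> R b a"
  by (induction xs) auto

lemma sorted_wrt_mem_last:
  "sorted_wrt R xs \<Longrightarrow> a \<in> set xs \<Longrightarrow> a = last xs \<or> R a (last xs)"
  by (induction xs) auto

lemma distinct_if_sorted_wrt_lt: "sorted_wrt (lt le) xs \<Longrightarrow> distinct xs"
  by (induction xs) (auto simp: lt_def)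

section \<open>Ranks\<close>

definition rank_chain :: "'a set \<Rightarrow> ('a \<Rightarrow> 'a \<Rightarrow> bool) \<Rightarrow> nat \<Rightarrow> 'a \<Rightarrow> bool" where
  "rank_chain P le m p \<longleftrightarrow>
     (\<exists>xs. length xs = Suc m \<and> set xs \<subseteq> P \<and> sorted_wrt (lt le) xs \<and> last xs = p)"

lemma rank_chain_less_card:
  assumes "finite P" and "rank_chain P le m p"
  shows "m < card P"
proof -
  obtain xs where xs: "length xs = Suc m" "set xs \<subseteq> P" "sorted_wrt (lt le) xs"
    using assms(2) unfolding rank_chain_def by blast
  then have "card (set xs) = Suc m" by (simp add: distinct_card distinct_if_sorted_wrt_lt)
  moreover have "card (set xs) \<le> card P" using xs(2) assms(1) by (rule card_mono[rotated])
  ultimately show ?thesis by simp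
qed

lemma rank_chain_rank_and_le_rank:
  assumes "finite P" and "p \<in> P"
  shows rank_chain_rank: "rank_chain P le (rank P le p) p"
    and le_rank_if_rank_chain: "rank_chain P le m p \<Longrightarrow> m \<le> rank P le p"
proof -
  have rank_eq: "rank P le p = (GREATEST m. rank_chain P le m p)"
    unfolding rank_def rank_chain_def by simp
  have bounded: "\<And>m. rank_chain P le m p \<Longrightarrow> m \<le> card P"
    using rank_chain_less_card[OF assms(1)] by fastforce
  have "rank_chain P le 0 p" unfolding rank_chain_def using assms(2) by (intro exI[of _ "[p]"]) simp
  then show "rank_chain P le (rank P le p) p"
    unfolding rank_eq using bounded by (rule GreatestI_nat)
  show "m \<le> rank P le p" if "rank_chain P le m p"
    unfolding rank_eq using that bounded by (rule Greatest_le_nat)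
qed

lemma rank_less:
  assumes po: "poset_on P le" and "x \<in> P" "y \<in> P" "le x y" "x \<noteq> y"
  shows "rank P le x < rank P le y"
proof -
  have fin: "finite P" using po unfolding poset_on_def by blast
  obtain xs where xs: "length xs = Suc (rank P le x)" "set xs \<subseteq> P" "sorted_wrt (lt le) xs"
      "last xs = x"
    using rank_chain_rank[OF fin \<open>x \<in> P\<close>] unfolding rank_chain_def by blast
  have "lt le a y" if "a \<in> set xs" for a
  proof -
    have "a \<in> P" using that xs(2) by blast
    moreover have "a = x \<or> lt le a x" using sorted_wrt_mem_last[OF xs(3) that] xs(4) by simp
    ultimately show ?thesis using po assms(2-5) unfolding lt_def poset_on_def by metis
  qed
  then have "rank_chain P le (Suc (rank P le x)) y"
    unfolding rank_chain_def using xs assms(3)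
    by (intro exI[of _ "xs @ [y]"]) (auto simp: sorted_wrt_append)
  then show ?thesis using le_rank_if_rank_chain[OF fin \<open>y \<in> P\<close>] by fastforce
qed

lemma rank_predecessor:
  assumes po: "poset_on P le" and "p \<in> P" and "rank P le p = Suc r"
  shows "\<exists>z\<in>P. le z p \<and> z \<noteq> p \<and> rank P le z = r"
proof -
  have fin: "finite P" using po unfolding poset_on_def by blast
  have "rank_chain P le (Suc r) p"
    using rank_chain_rank[OF fin \<open>p \<in> P\<close>, where le = le] assms(3) by simp
  then obtain xs where xs: "length xs = Suc (Suc r)" "set xs \<subseteq> P" "sorted_wrt (lt le) xs"
      "last xs = p"
    unfolding rank_chain_def by blast
  define ys where "ys = butlast xs"
  have xs_eq: "xs = ys @ [p]"
    using xs(1,4) unfolding ys_def by (metis append_butlast_last_id list.size(3) nat.distinct(1))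
  have ys: "length ys = Suc r" "set ys \<subseteq> P" "sorted_wrt (lt le) ys" "\<forall>a\<in>set ys. lt le a p"
    using xs xs_eq by (auto simp: sorted_wrt_append)
  define z where "z = last ys"
  have "z \<in> set ys" unfolding z_def using ys(1) by (metis last_in_set list.size(3) nat.distinct(1))
  then have z: "z \<in> P" "lt le z p" using ys by blast+
  have "rank_chain P le r z" unfolding rank_chain_def z_def using ys by blast
  then have "r \<le> rank P le z" using le_rank_if_rank_chain[OF fin \<open>z \<in> P\<close>] by blast
  moreover have "rank P le z < Suc r"
    using rank_less[OF po z(1) \<open>p \<in> P\<close>] z(2) assms(3) unfolding lt_def by simp
  ultimately show ?thesis using z unfolding lt_def by auto
qed

lemma ex_maximal_chain_superset:
  assumes po: "poset_on P le" and "is_chain P le C"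
  shows "\<exists>D. maximal_chain P le D \<and> C \<subseteq> D"
proof -
  have fin: "finite P" using po unfolding poset_on_def by blast
  define F where "F = {D. is_chain P le D \<and> C \<subseteq> D}"
  have F_Pow: "F \<subseteq> Pow P" unfolding F_def is_chain_def by blast
  have "card E < Suc (card P)" if "E \<in> F" for E
    using that F_Pow card_mono[OF fin, of E] by auto
  moreover have "C \<in> F" using assms(2) unfolding F_def by blast
  ultimately obtain D where D: "D \<in> F" and D_max: "\<And>E. E \<in> F \<Longrightarrow> card E \<le> card D"
    using ex_has_greatest_nat[of "\<lambda>D. D \<in> F" C card "Suc (card P)"] by blast
  have "E = D" if "is_chain P le E" "D \<subseteq> E" for E
  proof -
    have "E \<in> F" using that D unfolding F_def by blast
    then have "finite E" "card E \<le> card D" using D_max F_Pow finite_subset[OF _ fin] by auto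
    then show "E = D" using card_seteq[of E D] that(2) by simp
  qed
  then show ?thesis using D unfolding F_def maximal_chain_def by blast
qed

lemma rank_le_if_ranked:
  assumes ranked: "ranked_of_rank P le n" and "p \<in> P"
  shows "rank P le p \<le> n"
proof -
  have po: "poset_on P le" using ranked unfolding ranked_of_rank_def by blast
  then have fin: "finite P" unfolding poset_on_def by blast
  obtain xs where xs: "length xs = Suc (rank P le p)" "set xs \<subseteq> P" "sorted_wrt (lt le) xs"
    using rank_chain_rank[OF fin \<open>p \<in> P\<close>] unfolding rank_chain_def by blast
  have "is_chain P le (set xs)"
    unfolding is_chain_def using xs(2) sorted_wrt_mem_cases[OF xs(3)] po
    unfolding poset_on_def lt_def by blast
  then obtain D where D: "maximal_chain P le D" "set xs \<subseteq> D"
    using ex_maximal_chain_superset[OF po] by blast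
  have "finite D" using D(1) fin unfolding maximal_chain_def is_chain_def by (meson finite_subset)
  then have "card (set xs) \<le> card D" using D(2) by (rule card_mono)
  also have "card D = Suc n" using D(1) ranked unfolding ranked_of_rank_def by blast
  finally show ?thesis using xs(1,3) by (simp add: distinct_card distinct_if_sorted_wrt_lt)
qed

section \<open>The 6-crown\<close>

lemma crown6_less_cases:
  "crown6_le a b \<Longrightarrow> a \<noteq> b \<Longrightarrow> a < 3 \<and> 3 \<le> b"
  by (simp add: crown6_le_def)

lemma crown6_le_minus_3: "b \<in> crown6 \<Longrightarrow> 3 \<le> b \<Longrightarrow> crown6_le (b - 3) b"
  unfolding crown6_le_def crown6_def by auto

lemma crown6_incomparable_iff:
  assumes "a < 3" and "b \<in> {3..<6}"
  shows "\<not> crown6_le a b \<longleftrightarrow> b = 3 + (a + 1) mod 3"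
    and "\<not> crown6_le a b \<longleftrightarrow> a = (b + 2) mod 3"
proof -
  have "a = 0 \<or> a = 1 \<or> a = 2" "b = 3 \<or> b = 4 \<or> b = 5" using assms by auto
  then show "\<not> crown6_le a b \<longleftrightarrow> b = 3 + (a + 1) mod 3"
    and "\<not> crown6_le a b \<longleftrightarrow> a = (b + 2) mod 3"
    unfolding crown6_le_def by (elim disjE; simp)+
qed

lemma crown6_ex1_upper_incomparable:
  assumes "a < 3"
  shows "\<exists>!b. b \<in> {3..<6} \<and> \<not> crown6_le a b"
proof (rule ex1I[of _ "3 + (a + 1) mod 3"])
  show "3 + (a + 1) mod 3 \<in> {3..<6} \<and> \<not> crown6_le a (3 + (a + 1) mod 3)"
    using crown6_incomparable_iff(1)[OF assms] by simp
qed (use crown6_incomparable_iff(1)[OF assms] in blast)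

lemma crown6_ex1_lower_incomparable:
  assumes "b \<in> {3..<6}"
  shows "\<exists>!a. a \<in> {0..<3} \<and> \<not> crown6_le a b"
proof (rule ex1I[of _ "(b + 2) mod 3"])
  show "(b + 2) mod 3 \<in> {0..<3} \<and> \<not> crown6_le ((b + 2) mod 3) b"
    using crown6_incomparable_iff(2)[OF _ assms] by simp
qed (use crown6_incomparable_iff(2)[OF _ assms] in auto)

lemma crown_iso_splits_levels:
  assumes po: "poset_on P le" and h: "bij_betw h (levels P le i (Suc i)) crown6"
    and h_le: "\<forall>x\<in>levels P le i (Suc i). \<forall>y\<in>levels P le i (Suc i). le x y \<longleftrightarrow> crown6_le (h x) (h y)"
  shows "bij_betw h {p\<in>P. rank P le p = i} {0..<3}"
    and "bij_betw h {p\<in>P. rank P le p = Suc i} {3..<6}"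
proof -
  let ?L = "\<lambda>j. {p\<in>P. rank P le p = j}"
  let ?Lv = "levels P le i (Suc i)"
  have Lv_eq: "?Lv = ?L i \<union> ?L (Suc i)" by (auto simp: levels_def)
  have crown6_eq: "crown6 = {0..<3} \<union> {3..<6}" by (auto simp: crown6_def)
  have lower: "h x < 3" if "x \<in> ?L i" for x
  proof (rule ccontr)
    assume "\<not> h x < 3"
    have x: "x \<in> ?Lv" using that Lv_eq by blast
    then have hx: "h x \<in> crown6" by (rule bij_betw_apply[OF h])
    then have "h x - 3 \<in> h ` ?Lv" using h unfolding bij_betw_def crown6_def by auto
    then obtain z where z: "z \<in> ?Lv" "h z = h x - 3" by (metis imageE)
    have "le z x" using h_le z x crown6_le_minus_3[OF hx] \<open>\<not> h x < 3\<close> by simp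
    moreover have "z \<noteq> x" using z \<open>\<not> h x < 3\<close> by auto
    ultimately have "rank P le z < rank P le x" using rank_less[OF po] z x unfolding levels_def by blast
    then show False using z that unfolding levels_def by simp
  qed
  have upper: "3 \<le> h y" if y: "y \<in> ?L (Suc i)" for y
  proof -
    obtain z where z: "z \<in> P" "le z y" "z \<noteq> y" "rank P le z = i"
      using rank_predecessor[OF po] y by blast
    then have "z \<in> ?Lv" "y \<in> ?Lv" using y Lv_eq by auto
    then have "crown6_le (h z) (h y)" "h z \<noteq> h y"
      using h_le z h unfolding bij_betw_def inj_on_def by blast+
    then show ?thesis using crown6_less_cases by blast
  qed
  have h_bij: "bij_betw h (?L i \<union> ?L (Suc i)) ({0..<3} \<union> {3..<6})"
    using h unfolding Lv_eq crown6_eq .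
  have "h ` ?L (Suc i) \<subseteq> {3..<6}"
  proof
    fix b assume "b \<in> h ` ?L (Suc i)"
    then obtain y where y: "y \<in> ?L (Suc i)" "b = h y" by blast
    then have "h y \<in> crown6" using bij_betw_apply[OF h_bij] crown6_eq by blast
    then show "b \<in> {3..<6}" using upper[OF y(1)] y(2) unfolding crown6_def by auto
  qed
  moreover have "h ` ?L i \<subseteq> {0..<3}" using lower by auto
  ultimately show "bij_betw h (?L i) {0..<3}" and "bij_betw h (?L (Suc i)) {3..<6}"
    using bij_betw_restrict_Un[OF h_bij] by auto
qed

lemma crown_adjacent_levels:
  assumes po: "poset_on P le" and iso: "order_iso (levels P le i (Suc i)) le crown6 crown6_le"
  shows card_lower_level: "card {p\<in>P. rank P le p = i} = 3"
    and card_upper_level: "card {p\<in>P. rank P le p = Suc i} = 3"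
    and rank_ex1_upper_incomparable:
      "x \<in> P \<Longrightarrow> rank P le x = i \<Longrightarrow> \<exists>!y. y \<in> P \<and> rank P le y = Suc i \<and> \<not> le x y"
    and rank_ex1_lower_incomparable:
      "y \<in> P \<Longrightarrow> rank P le y = Suc i \<Longrightarrow> \<exists>!x. x \<in> P \<and> rank P le x = i \<and> \<not> le x y"
proof -
  let ?L = "\<lambda>j. {p\<in>P. rank P le p = j}"
  obtain h where h: "bij_betw h (levels P le i (Suc i)) crown6"
    and h_le: "\<forall>x\<in>levels P le i (Suc i). \<forall>y\<in>levels P le i (Suc i). le x y \<longleftrightarrow> crown6_le (h x) (h y)"
    using iso unfolding order_iso_def by blast
  note h_lower = crown_iso_splits_levels(1)[OF po h h_le]
    and h_upper = crown_iso_splits_levels(2)[OF po h h_le]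
  show "card (?L i) = 3" using bij_betw_same_card[OF h_lower] by simp
  show "card (?L (Suc i)) = 3" using bij_betw_same_card[OF h_upper] by simp
  have incomparable_iff: "\<not> le x y \<longleftrightarrow> \<not> crown6_le (h x) (h y)" if "x \<in> ?L i" "y \<in> ?L (Suc i)" for x y
    using h_le that unfolding levels_def by auto
  show "\<exists>!y. y \<in> P \<and> rank P le y = Suc i \<and> \<not> le x y" if x: "x \<in> P" "rank P le x = i" for x
  proof -
    have "h x \<in> {0..<3}" using h_lower x unfolding bij_betw_def by blast
    then have "\<exists>!b. b \<in> {3..<6} \<and> \<not> crown6_le (h x) b"
      by (intro crown6_ex1_upper_incomparable) simp
    then have "\<exists>!y. y \<in> ?L (Suc i) \<and> \<not> crown6_le (h x) (h y)"
      using bij_betw_ex1_iff[OF h_upper, of "\<lambda>b. \<not> crown6_le (h x) b"] by blast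
    moreover have "(y \<in> ?L (Suc i) \<and> \<not> crown6_le (h x) (h y)) \<longleftrightarrow> (y \<in> ?L (Suc i) \<and> \<not> le x y)" for y
      using incomparable_iff x by blast
    ultimately show ?thesis by simp
  qed
  show "\<exists>!x. x \<in> P \<and> rank P le x = i \<and> \<not> le x y" if y: "y \<in> P" "rank P le y = Suc i" for y
  proof -
    have "h y \<in> {3..<6}" using h_upper y unfolding bij_betw_def by blast
    then have "\<exists>!a. a \<in> {0..<3} \<and> \<not> crown6_le a (h y)" by (rule crown6_ex1_lower_incomparable)
    then have "\<exists>!x. x \<in> ?L i \<and> \<not> crown6_le (h x) (h y)"
      using bij_betw_ex1_iff[OF h_lower, of "\<lambda>a. \<not> crown6_le a (h y)"] by blast
    moreover have "(x \<in> ?L i \<and> \<not> crown6_le (h x) (h y)) \<longleftrightarrow> (x \<in> ?L i \<and> \<not> le x y)" for x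
      using incomparable_iff y by blast
    ultimately show ?thesis by simp
  qed
qed

section \<open>Sections and towers of sections\<close>

lemma section_posetD:
  assumes "section_poset n R"
  shows section_poset_chain: "i \<le> 2 \<Longrightarrow> k < l \<Longrightarrow> l \<le> n \<Longrightarrow> lt R (i, k) (i, l)"
    and section_poset_row_antichain: "k \<le> n \<Longrightarrow> i \<le> 2 \<Longrightarrow> j \<le> 2 \<Longrightarrow> R (i, k) (j, k) \<Longrightarrow> i = j"
    and section_poset_gap: "k < n \<Longrightarrow> \<exists>i\<le>2. \<exists>j\<le>2. \<not> lt R (i, k) (j, Suc k)"
  using assms unfolding section_poset_def by simp_all

definition three_antichain_rows :: "('a \<Rightarrow> 'a \<Rightarrow> bool) \<Rightarrow> (nat \<Rightarrow> 'a set) \<Rightarrow> nat \<Rightarrow> bool" where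
  "three_antichain_rows le Row n \<longleftrightarrow>
     (\<forall>k\<le>n. card (Row k) = 3 \<and> (\<forall>x\<in>Row k. \<forall>y\<in>Row k. le x y \<longrightarrow> x = y)) \<and>
     (\<forall>k<n. \<exists>x\<in>Row k. \<exists>y\<in>Row (Suc k). le x y \<and> x \<noteq> y) \<and>
     (\<forall>k<n. \<exists>x\<in>Row k. \<exists>y\<in>Row (Suc k). \<not> le x y)"

lemma section_three_antichain_rows:
  assumes sec: "section_poset n R" and iso: "order_iso B le (section_carrier n) R"
  shows "\<exists>Row. B = (\<Union>k\<le>n. Row k) \<and> three_antichain_rows le Row n"
proof -
  obtain h where h: "bij_betw h (section_carrier n) B"
    and h_le: "\<forall>u\<in>section_carrier n. \<forall>v\<in>section_carrier n. R u v \<longleftrightarrow> le (h u) (h v)"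
    using order_iso_sym[OF iso] unfolding order_iso_def by blast
  have inj: "inj_on h (section_carrier n)" using h unfolding bij_betw_def by blast
  have mem: "(i, k) \<in> section_carrier n" if "i \<le> 2" "k \<le> n" for i k
    using that by (simp add: section_carrier_def)
  define Row where "Row k = h ` ({0..2} \<times> {k})" for k
  have in_Row: "h (i, k) \<in> Row k" if "i \<le> 2" for i k
    using that unfolding Row_def by simp
  have "B = h ` section_carrier n" using h by (simp add: bij_betw_def)
  also have "section_carrier n = (\<Union>k\<le>n. {0..2} \<times> {k})" by (auto simp: section_carrier_def)
  finally have "B = (\<Union>k\<le>n. Row k)" unfolding Row_def image_UN .
  moreover have "three_antichain_rows le Row n"
    unfolding three_antichain_rows_def
  proof (intro conjI allI impI)
    fix k assume k: "k \<le> n"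
    have "{0..2} \<times> {k} \<subseteq> section_carrier n" using mem k by auto
    then have "card (Row k) = card ({0..2::nat} \<times> {k})"
      unfolding Row_def using inj_on_subset[OF inj] by (intro card_image) blast
    then show "card (Row k) = 3" by simp
    show "\<forall>x\<in>Row k. \<forall>y\<in>Row k. le x y \<longrightarrow> x = y"
    proof (intro ballI impI)
      fix x y assume "x \<in> Row k" "y \<in> Row k" "le x y"
      then obtain i j where ij: "i \<le> 2" "j \<le> 2" "x = h (i, k)" "y = h (j, k)"
        unfolding Row_def by auto
      then have "R (i, k) (j, k)" using h_le mem[OF ij(1) k] mem[OF ij(2) k] \<open>le x y\<close> by blast
      then show "x = y" using section_poset_row_antichain[OF sec k ij(1,2)] ij(3,4) by simp
    qed
  next
    fix k assume k: "k < n"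
    have mem': "(i, k) \<in> section_carrier n" "(i, Suc k) \<in> section_carrier n" if "i \<le> 2" for i
      using mem that k by simp_all
    have "lt R (0, k) (0, Suc k)" using section_poset_chain[OF sec] k by simp
    then have "le (h (0, k)) (h (0, Suc k))" "h (0, k) \<noteq> h (0, Suc k)"
      using h_le mem'[of 0] inj_onD[OF inj _ mem'[of 0]] unfolding lt_def by auto
    then show "\<exists>x\<in>Row k. \<exists>y\<in>Row (Suc k). le x y \<and> x \<noteq> y" using in_Row[of 0] by blast
    obtain i j where ij: "i \<le> 2" "j \<le> 2" "\<not> lt R (i, k) (j, Suc k)"
      using section_poset_gap[OF sec k] by blast
    then have "\<not> le (h (i, k)) (h (j, Suc k))"
      using h_le mem'(1)[OF ij(1)] mem'(2)[OF ij(2)] unfolding lt_def by auto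
    then show "\<exists>x\<in>Row k. \<exists>y\<in>Row (Suc k). \<not> le x y" using in_Row ij(1,2) by blast
  qed
  ultimately show ?thesis by blast
qed

definition incomparable :: "('a \<Rightarrow> 'a \<Rightarrow> bool) \<Rightarrow> 'a \<Rightarrow> 'a \<Rightarrow> bool" where
  "incomparable le x y \<longleftrightarrow> \<not> le x y \<and> \<not> le y x"

lemma section_incomparable_partner:
  assumes "is_section B le" and "q \<in> B"
  shows "\<exists>q'\<in>B. incomparable le q q'"
proof -
  have "\<exists>A\<subseteq>B. q \<in> A \<and> 2 \<le> card A \<and> (\<forall>x\<in>A. \<forall>y\<in>A. le x y \<longrightarrow> x = y)"
    using assms(1) unfolding is_section_def
  proof (elim disjE exE conjE)
    assume "two_antichain B le"
    then show ?thesis using assms(2) unfolding two_antichain_def by auto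
  next
    fix n R assume "section_poset n R" "order_iso B le (section_carrier n) R"
    then obtain Row where B: "B = (\<Union>k\<le>n. Row k)" and rows: "three_antichain_rows le Row n"
      using section_three_antichain_rows by blast
    then obtain k where k: "k \<le> n" "q \<in> Row k" using assms(2) by blast
    then have "card (Row k) = 3" "\<forall>x\<in>Row k. \<forall>y\<in>Row k. le x y \<longrightarrow> x = y"
      using rows unfolding three_antichain_rows_def by simp_all
    moreover have "Row k \<subseteq> B" using B k(1) by blast
    ultimately show ?thesis using k(2) by (intro exI[of _ "Row k"]) simp
  qed
  then obtain A where A: "A \<subseteq> B" "q \<in> A" "2 \<le> card A" "\<forall>x\<in>A. \<forall>y\<in>A. le x y \<longrightarrow> x = y"
    by blast
  have "\<not> A \<subseteq> {q}" using A(3) card_mono[of "{q}" A] by auto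
  then obtain q' where "q' \<in> A" "q' \<noteq> q" by blast
  then show ?thesis using A unfolding incomparable_def by blast
qed

lemma ordinal_sum_partner_beside_block:
  fixes k :: nat
  assumes Q: "Q = (\<Union>i<k. B i)"
    and partners: "\<And>i q. i < k \<Longrightarrow> q \<in> B i \<Longrightarrow> \<exists>q'\<in>B i. incomparable le q q'"
    and ordered: "\<forall>i<k. \<forall>j<k. i < j \<longrightarrow> (\<forall>x\<in>B i. \<forall>y\<in>B j. le x y \<and> \<not> le y x)"
    and "j < k" and "q \<in> Q" and "q \<notin> B j"
  shows "\<exists>q'\<in>Q. incomparable le q q' \<and>
    ((\<forall>s\<in>B j. le s q \<and> le s q') \<or> (\<forall>s\<in>B j. le q s \<and> le q' s))"
proof -
  have "q \<in> (\<Union>i<k. B i)" using \<open>q \<in> Q\<close> Q by simp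
  then obtain i where i: "i < k" "q \<in> B i" by blast
  have "i \<noteq> j" using i(2) \<open>q \<notin> B j\<close> by auto
  obtain q' where q': "q' \<in> B i" "incomparable le q q'" using partners[OF i] by blast
  have "q' \<in> Q" using Q i(1) q'(1) by blast
  moreover have "(\<forall>s\<in>B j. le s q \<and> le s q') \<or> (\<forall>s\<in>B j. le q s \<and> le q' s)"
  proof (cases "i < j")
    case True
    then have "\<forall>x\<in>B i. \<forall>y\<in>B j. le x y \<and> \<not> le y x" using ordered i(1) \<open>j < k\<close> by blast
    then show ?thesis using i(2) q'(1) by blast
  next
    case False
    then have "j < i" using \<open>i \<noteq> j\<close> by simp
    then have "\<forall>x\<in>B j. \<forall>y\<in>B i. le x y \<and> \<not> le y x" using ordered i(1) \<open>j < k\<close> by blast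
    then show ?thesis using i(2) q'(1) by blast
  qed
  ultimately show ?thesis using q'(2) by blast
qed

lemma tower_of_sections_section_block:
  assumes "tower_of_sections Q le" and "\<not> four_tower Q le"
  obtains S n R where "S \<subseteq> Q" and "section_poset n R" and "order_iso S le (section_carrier n) R"
    and "\<And>q. q \<in> Q \<Longrightarrow> q \<notin> S \<Longrightarrow> \<exists>q'\<in>Q. incomparable le q q' \<and>
           ((\<forall>s\<in>S. le s q \<and> le s q') \<or> (\<forall>s\<in>S. le q s \<and> le q' s))"
proof -
  have po: "poset_on Q le" and "ordinal_sum_of is_section Q le"
    using assms(1) unfolding tower_of_sections_def by simp_all
  then obtain k :: nat and B where k: "k \<ge> 1" and Q: "Q = (\<Union>i<k. B i)"
    and disjoint: "\<forall>i<k. \<forall>j<k. i \<noteq> j \<longrightarrow> B i \<inter> B j = {}"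
    and sections: "\<forall>i<k. is_section (B i) le"
    and ordered: "\<forall>i<k. \<forall>j<k. i < j \<longrightarrow> (\<forall>x\<in>B i. \<forall>y\<in>B j. le x y \<and> \<not> le y x)"
    unfolding ordinal_sum_of_def by blast
  have "\<not> (\<forall>i<k. two_antichain (B i) le)"
  proof
    assume "\<forall>i<k. two_antichain (B i) le"
    with Q disjoint ordered have "ordinal_sum_of two_antichain Q le"
      unfolding ordinal_sum_of_def using k by blast
    then show False using assms(2) po unfolding four_tower_def by blast
  qed
  then obtain j where j: "j < k" "\<not> two_antichain (B j) le" by blast
  then obtain n R where sec: "section_poset n R" and iso: "order_iso (B j) le (section_carrier n) R"
    using sections unfolding is_section_def by blast
  have BQ: "B j \<subseteq> Q" using Q j(1) by blast
  have partner: "\<exists>q'\<in>Q. incomparable le q q' \<and>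
      ((\<forall>s\<in>B j. le s q \<and> le s q') \<or> (\<forall>s\<in>B j. le q s \<and> le q' s))" if "q \<in> Q" "q \<notin> B j" for q
    by (rule ordinal_sum_partner_beside_block[OF Q _ ordered j(1) that])
      (simp add: section_incomparable_partner sections)
  show thesis by (rule that[OF BQ sec iso partner])
qed

section \<open>Stacks of crowns\<close>

text \<open>The last two assumptions say that consecutive levels form a 6-crown.\<close>

locale crown_stack =
  fixes P :: "'a set" and le :: "'a \<Rightarrow> 'a \<Rightarrow> bool" and lev :: "'a \<Rightarrow> nat" and N :: nat
  assumes poset: "poset_on P le"
    and lev_le_top: "x \<in> P \<Longrightarrow> lev x \<le> N"
    and card_level: "i \<le> N \<Longrightarrow> card {p\<in>P. lev p = i} = 3"
    and lev_less: "x \<in> P \<Longrightarrow> y \<in> P \<Longrightarrow> le x y \<Longrightarrow> x \<noteq> y \<Longrightarrow> lev x < lev y"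
    and ex1_upper_incomparable:
      "x \<in> P \<Longrightarrow> lev x < N \<Longrightarrow> \<exists>!y. y \<in> P \<and> lev y = Suc (lev x) \<and> \<not> le x y"
    and ex1_lower_incomparable:
      "y \<in> P \<Longrightarrow> 0 < lev y \<Longrightarrow> \<exists>!x. x \<in> P \<and> Suc (lev x) = lev y \<and> \<not> le x y"
begin

lemma trans_le: "x \<in> P \<Longrightarrow> y \<in> P \<Longrightarrow> z \<in> P \<Longrightarrow> le x y \<Longrightarrow> le y z \<Longrightarrow> le x z"
  using poset unfolding poset_on_def by blast

lemma dual: "crown_stack P (\<lambda>x y. le y x) (\<lambda>x. N - lev x) N"
proof unfold_locales
  show "poset_on P (\<lambda>x y. le y x)" using poset unfolding poset_on_def by blast
  show "N - lev x \<le> N" for x by simp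
  show "card {p\<in>P. N - lev p = i} = 3" if "i \<le> N" for i
  proof -
    have "{p\<in>P. N - lev p = i} = {p\<in>P. lev p = N - i}" using lev_le_top that by fastforce
    then show ?thesis using card_level by simp
  qed
  show "N - lev x < N - lev y" if "x \<in> P" "y \<in> P" "le y x" "x \<noteq> y" for x y
    using lev_less[of y x] lev_le_top[of x] that by simp
  show "\<exists>!y. y \<in> P \<and> N - lev y = Suc (N - lev x) \<and> \<not> le y x" if "x \<in> P" "N - lev x < N" for x
  proof -
    have "y \<in> P \<and> N - lev y = Suc (N - lev x) \<and> \<not> le y x \<longleftrightarrow> y \<in> P \<and> Suc (lev y) = lev x \<and> \<not> le y x" for y
      using lev_le_top[of x] lev_le_top[of y] that by auto
    then show ?thesis using ex1_lower_incomparable[of x] that by simp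
  qed
  show "\<exists>!x. x \<in> P \<and> Suc (N - lev x) = N - lev y \<and> \<not> le y x" if "y \<in> P" "0 < N - lev y" for y
  proof -
    have "x \<in> P \<and> Suc (N - lev x) = N - lev y \<and> \<not> le y x \<longleftrightarrow> x \<in> P \<and> lev x = Suc (lev y) \<and> \<not> le y x" for x
      using lev_le_top[of x] lev_le_top[of y] that by auto
    then show ?thesis using ex1_upper_incomparable[of y] that by simp
  qed
qed

lemma upper_incomparable_unique:
  assumes "x \<in> P" "y \<in> P" "y' \<in> P" "lev y = Suc (lev x)" "lev y' = Suc (lev x)"
    and "\<not> le x y" "\<not> le x y'"
  shows "y = y'"
proof -
  have "lev x < N" using lev_le_top[OF assms(2)] assms(4) by simp
  then show ?thesis using ex1_upper_incomparable[OF assms(1)] assms by blast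
qed

lemma lower_incomparable_unique:
  assumes "y \<in> P" "x \<in> P" "x' \<in> P" "Suc (lev x) = lev y" "Suc (lev x') = lev y"
    and "\<not> le x y" "\<not> le x' y"
  shows "x = x'"
  using ex1_lower_incomparable[OF assms(1)] assms by auto

lemma ex_lower_incomparable:
  assumes "y \<in> P" and "lev y = Suc i"
  shows "\<exists>x\<in>P. lev x = i \<and> \<not> le x y"
  using ex1_lower_incomparable[OF assms(1)] assms(2) by force

lemma two_below_of_lev_Suc:
  assumes "v \<in> P" and "lev v = Suc i"
  shows "\<exists>y1\<in>P. \<exists>y2\<in>P. y1 \<noteq> y2 \<and> lev y1 = i \<and> lev y2 = i \<and> le y1 v \<and> le y2 v"
proof -
  have "card {p\<in>P. lev p = i} = 3" using card_level lev_le_top[OF assms(1)] assms(2) by simp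
  then have "\<exists>y1\<in>{p\<in>P. lev p = i}. \<exists>y2\<in>{p\<in>P. lev p = i}. y1 \<noteq> y2 \<and> le y1 v \<and> le y2 v"
    by (rule card_3_two_satisfy) (use lower_incomparable_unique[OF assms(1)] assms(2) in auto)
  then show ?thesis by blast
qed

lemma le_if_lev_gap:
  assumes "x \<in> P" "y \<in> P" "lev x + 2 \<le> lev y"
  shows "le x y"
  using assms(2,3)
proof (induction "lev y" arbitrary: y rule: less_induct)
  case less
  show ?case
  proof (cases "lev y = lev x + 2")
    case True
    have "card {p\<in>P. lev p = Suc (lev x)} = 3"
      using card_level lev_le_top[OF less.prems(1)] True by simp
    then have "\<exists>w\<in>{p\<in>P. lev p = Suc (lev x)}. le w y \<and> le x w"
      by (rule card_3_common_satisfy)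
        (use lower_incomparable_unique[OF less.prems(1)] upper_incomparable_unique[OF assms(1)]
           True in auto)
    then show ?thesis using trans_le assms(1) less.prems(1) by blast
  next
    case False
    then obtain z where z: "z \<in> P" "lev z = lev y - 1" "le z y"
      using two_below_of_lev_Suc[OF less.prems(1), of "lev y - 1"] less.prems(2) by auto
    then have "le x z" using less.hyps[of z] less.prems False by simp
    then show ?thesis using trans_le assms(1) z less.prems(1) by blast
  qed
qed

lemma lower_not_below_unique:
  assumes "v \<in> P" "a \<in> P" "a' \<in> P" "lev a' = lev a" "lev a < lev v"
    and "\<not> le a v" "\<not> le a' v"
  shows "a = a'"
proof (cases "lev v = Suc (lev a)")
  case True
  then show ?thesis using lower_incomparable_unique[OF assms(1-3)] assms(4,6,7) by simp
next
  case False
  then have "le a v" using le_if_lev_gap[OF assms(2,1)] assms(5) by simp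
  then show ?thesis using assms(6) by blast
qed

lemma common_lower_bound_at_level:
  assumes "u \<in> P" "u' \<in> P" "i < lev u" "i < lev u'"
  shows "\<exists>w\<in>P. lev w = i \<and> le w u \<and> le w u'"
proof -
  have "card {p\<in>P. lev p = i} = 3" using card_level lev_le_top[OF assms(1)] assms(3) by simp
  then have "\<exists>w\<in>{p\<in>P. lev p = i}. le w u \<and> le w u'"
    by (rule card_3_common_satisfy)
      (use lower_not_below_unique[OF assms(1)] lower_not_below_unique[OF assms(2)] assms(3,4)
         in auto)
  then show ?thesis by blast
qed

lemma lev_less_if_above_two:
  assumes "v \<in> P" "y1 \<in> P" "y2 \<in> P" "y1 \<noteq> y2" "lev y2 = lev y1" "le y1 v" "le y2 v"
  shows "lev y1 < lev v"
proof (cases "v = y1")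
  case True
  then show ?thesis using lev_less[OF assms(3,1,7)] assms(4,5) by simp
next
  case False
  then show ?thesis using lev_less[OF assms(2,1,6)] by simp
qed

lemma antichain_is_level:
  assumes "A \<subseteq> P" and "card A = 3" and antichain: "\<forall>x\<in>A. \<forall>y\<in>A. le x y \<longrightarrow> x = y"
  shows "\<exists>i. A = {p\<in>P. lev p = i}"
proof -
  obtain x y z where A: "A = {x, y, z}" "x \<noteq> y" "y \<noteq> z" "x \<noteq> z"
    using card_3_iff[THEN iffD1, OF assms(2)] by blast
  have mem: "x \<in> A" "y \<in> A" "z \<in> A" using A(1) by simp_all
  have close: "lev b \<le> Suc (lev a)" if "a \<in> A" "b \<in> A" "a \<noteq> b" for a b
  proof (rule ccontr)
    assume "\<not> lev b \<le> Suc (lev a)"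
    then have "le a b" using le_if_lev_gap that assms(1) by (simp add: subset_iff)
    then show False using antichain that by blast
  qed
  have not_adjacent: "lev c \<noteq> Suc (lev a) \<and> lev a \<noteq> Suc (lev c)"
    if "a \<in> A" "b \<in> A" "c \<in> A" "a \<noteq> b" "lev b = lev a" for a b c
  proof -
    have P: "a \<in> P" "b \<in> P" "c \<in> P" using that(1-3) assms(1) by blast+
    have "\<not> le a c" "\<not> le b c" if "lev c \<noteq> lev a"
      using antichain \<open>a \<in> A\<close> \<open>b \<in> A\<close> \<open>c \<in> A\<close> that \<open>lev b = lev a\<close> by auto
    moreover have "\<not> le c a" "\<not> le c b" if "lev c \<noteq> lev a"
      using antichain \<open>a \<in> A\<close> \<open>b \<in> A\<close> \<open>c \<in> A\<close> that \<open>lev b = lev a\<close> by auto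
    ultimately show ?thesis
      using lower_incomparable_unique[OF P(3,1,2)] upper_incomparable_unique[OF P(3,1,2)] that(4,5)
      by auto
  qed
  have "lev y = lev x" "lev z = lev x"
    using close[OF mem(1,2) A(2)] close[OF mem(2,1) A(2)[symmetric]]
      close[OF mem(1,3) A(4)] close[OF mem(3,1) A(4)[symmetric]]
      close[OF mem(2,3) A(3)] close[OF mem(3,2) A(3)[symmetric]]
      not_adjacent[OF mem(1,2,3) A(2)] not_adjacent[OF mem(1,3,2) A(4)]
      not_adjacent[OF mem(2,3,1) A(3)]
    by presburger+
  then have "A \<subseteq> {p\<in>P. lev p = lev x}" using A(1) assms(1) by auto
  moreover have "card {p\<in>P. lev p = lev x} = 3"
    using card_level lev_le_top assms(1) mem(1) by blast
  moreover have "finite {p\<in>P. lev p = lev x}" using poset unfolding poset_on_def by simp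
  ultimately show ?thesis using assms(2) card_subset_eq by metis
qed

lemma three_antichain_rows_are_levels:
  assumes rows_P: "\<And>k. k \<le> n \<Longrightarrow> Row k \<subseteq> P" and rows: "three_antichain_rows le Row n"
  shows "\<exists>a. \<forall>k\<le>n. Row k = {p\<in>P. lev p = a + k}"
proof -
  have "\<exists>i. Row k = {p\<in>P. lev p = i}" if "k \<le> n" for k
    using rows_P[OF that] rows that unfolding three_antichain_rows_def
    by (intro antichain_is_level) simp_all
  then have "\<forall>k. \<exists>i. k \<le> n \<longrightarrow> Row k = {p\<in>P. lev p = i}" by blast
  then obtain A where A: "\<forall>k. k \<le> n \<longrightarrow> Row k = {p\<in>P. lev p = A k}" by (rule exE[OF choice])
  have step: "A (Suc k) = Suc (A k)" if k: "k < n" for k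
  proof -
    have Row_k: "Row k = {p\<in>P. lev p = A k}" and Row_Suc: "Row (Suc k) = {p\<in>P. lev p = A (Suc k)}"
      using A k by simp_all
    obtain x y where "x \<in> Row k" "y \<in> Row (Suc k)" "le x y" "x \<noteq> y"
      using rows k unfolding three_antichain_rows_def by blast
    then have "x \<in> P" "y \<in> P" "lev x = A k" "lev y = A (Suc k)" "le x y" "x \<noteq> y"
      unfolding Row_k Row_Suc by simp_all
    then have "A k < A (Suc k)" using lev_less by metis
    moreover obtain x' y' where "x' \<in> Row k" "y' \<in> Row (Suc k)" "\<not> le x' y'"
      using rows k unfolding three_antichain_rows_def by blast
    then have "x' \<in> P" "y' \<in> P" "lev x' = A k" "lev y' = A (Suc k)" "\<not> le x' y'"
      unfolding Row_k Row_Suc by simp_all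
    then have "\<not> A k + 2 \<le> A (Suc k)" using le_if_lev_gap by metis
    ultimately show ?thesis by linarith
  qed
  have A_linear: "A k = A 0 + k" if "k \<le> n" for k
    using that by (induction k) (simp_all add: step)
  show ?thesis
  proof (intro exI[of _ "A 0"] allI impI)
    fix k assume "k \<le> n"
    then show "Row k = {p\<in>P. lev p = A 0 + k}" using A A_linear[of k] by simp
  qed
qed

lemma section_is_level_interval:
  assumes "B \<subseteq> P" and "section_poset n R" and "order_iso B le (section_carrier n) R"
  shows "\<exists>a. a + n \<le> N \<and> B = {p\<in>P. a \<le> lev p \<and> lev p \<le> a + n}"
proof -
  obtain Row where B: "B = (\<Union>k\<le>n. Row k)" and rows: "three_antichain_rows le Row n"
    using section_three_antichain_rows[OF assms(2,3)] by blast
  have "Row k \<subseteq> P" if "k \<le> n" for k using B assms(1) that by blast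
  then obtain a where Row: "\<And>k. k \<le> n \<Longrightarrow> Row k = {p\<in>P. lev p = a + k}"
    using three_antichain_rows_are_levels rows by blast
  have "B = {p\<in>P. a \<le> lev p \<and> lev p \<le> a + n}"
  proof (intro set_eqI iffI)
    fix p assume "p \<in> B"
    then obtain k where "k \<le> n" "p \<in> Row k" using B by blast
    then show "p \<in> {p\<in>P. a \<le> lev p \<and> lev p \<le> a + n}" using Row by auto
  next
    fix p assume p: "p \<in> {p\<in>P. a \<le> lev p \<and> lev p \<le> a + n}"
    then have "p \<in> Row (lev p - a)" using Row[of "lev p - a"] by auto
    moreover have "lev p - a \<le> n" using p by auto
    ultimately show "p \<in> B" using B by blast
  qed
  moreover have "a + n \<le> N"
  proof -
    have "card (Row n) = 3" using rows unfolding three_antichain_rows_def by simp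
    then obtain p where "p \<in> Row n" by fastforce
    then show ?thesis using Row[of n] lev_le_top[of p] by auto
  qed
  ultimately show ?thesis by blast
qed

lemma level_nonempty:
  assumes "i \<le> N"
  shows "\<exists>p\<in>P. lev p = i"
proof -
  have "{p\<in>P. lev p = i} \<noteq> {}" using card_level[OF assms] by force
  then show ?thesis by blast
qed

lemma mono_map_fixing_level_lifts_next_level:
  assumes f_P: "\<And>x. x \<in> P \<Longrightarrow> f x \<in> P"
    and f_mono: "\<And>x y. x \<in> P \<Longrightarrow> y \<in> P \<Longrightarrow> le x y \<Longrightarrow> le (f x) (f y)"
    and f_fix: "\<And>p. p \<in> P \<Longrightarrow> lev p = b \<Longrightarrow> f p = p"
    and w: "w \<in> P" "lev w = Suc b"
  shows "b < lev (f w)"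
proof -
  obtain y1 y2 where y: "y1 \<in> P" "y2 \<in> P" "y1 \<noteq> y2" "lev y1 = b" "lev y2 = b" "le y1 w" "le y2 w"
    using two_below_of_lev_Suc[OF w] by blast
  then have "le y1 (f w)" "le y2 (f w)" using f_mono[OF _ w(1)] f_fix by metis+
  then show ?thesis using lev_less_if_above_two[OF f_P[OF w(1)] y(1-3)] y(4,5) by simp
qed

lemma no_retract_above_full_level:
  assumes retract: "retract P le Q" and "b < N" and level_in_Q: "{p\<in>P. lev p = b} \<subseteq> Q"
    and partner: "\<And>q. q \<in> Q \<Longrightarrow> b < lev q \<Longrightarrow>
      \<exists>q'\<in>Q. incomparable le q q' \<and> (\<forall>s\<in>P. lev s = b \<longrightarrow> le s q \<and> le s q')"
  shows False
proof -
  obtain f where QP: "Q \<subseteq> P" and f_Q: "\<And>x. x \<in> P \<Longrightarrow> f x \<in> Q"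
    and f_mono: "\<And>x y. x \<in> P \<Longrightarrow> y \<in> P \<Longrightarrow> le x y \<Longrightarrow> le (f x) (f y)"
    and f_id: "\<And>q. q \<in> Q \<Longrightarrow> f q = q"
    using retract unfolding retract_def by blast
  have lifts: "b < lev (f w)" if "w \<in> P" "lev w = Suc b" for w
    using mono_map_fixing_level_lifts_next_level[of f] f_Q QP f_mono f_id level_in_Q that by blast
  have not_Suc_b: "lev q \<noteq> Suc b" if q: "q \<in> Q" for q
  proof
    assume "lev q = Suc b"
    then obtain q' where "\<forall>s\<in>P. lev s = b \<longrightarrow> le s q \<and> le s q'" using partner[OF q] by auto
    moreover obtain x where "x \<in> P" "lev x = b" "\<not> le x q"
      using ex_lower_incomparable[of q b] \<open>lev q = Suc b\<close> q QP by blast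
    ultimately show False by blast
  qed
  obtain w0 where "w0 \<in> P" "lev w0 = Suc b" using level_nonempty[of "Suc b"] \<open>b < N\<close> by auto
  then have "f w0 \<in> Q \<and> b < lev (f w0)" using f_Q lifts by blast
  then obtain u where u: "u \<in> Q" "b < lev u" and u_min: "\<And>q. q \<in> Q \<Longrightarrow> b < lev q \<Longrightarrow> lev u \<le> lev q"
    using ex_has_least_nat[of "\<lambda>q. q \<in> Q \<and> b < lev q" _ lev] by blast
  obtain u' where u': "u' \<in> Q" "incomparable le u u'" and below: "\<forall>s\<in>P. lev s = b \<longrightarrow> le s u \<and> le s u'"
    using partner[OF u] by blast
  have "b < lev u'"
  proof -
    obtain s where s: "s \<in> P" "lev s = b" using level_nonempty[of b] \<open>b < N\<close> by auto
    then have "le s u" "le s u'" using below by auto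
    moreover have "s \<noteq> u'" using \<open>le s u\<close> u'(2) unfolding incomparable_def by auto
    ultimately show ?thesis using lev_less[OF s(1) _ \<open>le s u'\<close>] u'(1) QP s(2) by auto
  qed
  moreover have "lev u \<noteq> Suc b" "lev u' \<noteq> Suc b" using not_Suc_b u(1) u'(1) by auto
  ultimately have "Suc b < lev u" "Suc b < lev u'" using u(2) by auto
  then obtain w where w: "w \<in> P" "lev w = Suc b" "le w u" "le w u'"
    using common_lower_bound_at_level[of u u' "Suc b"] u(1) u'(1) QP by auto
  have "f w \<in> Q" "b < lev (f w)" using f_Q lifts w by auto
  moreover have "le (f w) u" "le (f w) u'"
    using f_mono[OF w(1) _ w(3)] f_mono[OF w(1) _ w(4)] f_id[OF u(1)] f_id[OF u'(1)] u(1) u'(1) QP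
    by auto
  ultimately have "f w = u" using lev_less[of "f w" u] u_min QP u(1) by force
  then show False using \<open>le (f w) u'\<close> u'(2) unfolding incomparable_def by simp
qed

lemma retract_level_interval_reaches_top:
  assumes retract: "retract P le Q" and S: "S = {p\<in>P. a \<le> lev p \<and> lev p \<le> c}"
    and "a \<le> c" and "S \<subseteq> Q"
    and partner: "\<And>q. q \<in> Q \<Longrightarrow> q \<notin> S \<Longrightarrow> \<exists>q'\<in>Q. incomparable le q q' \<and>
      ((\<forall>s\<in>S. le s q \<and> le s q') \<or> (\<forall>s\<in>S. le q s \<and> le q' s))"
  shows "N \<le> c"
proof (rule ccontr)
  assume "\<not> N \<le> c"
  have QP: "Q \<subseteq> P" using retract unfolding retract_def by blast
  have level_c: "{p\<in>P. lev p = c} \<subseteq> S" using S \<open>a \<le> c\<close> by auto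
  obtain s0 where s0: "s0 \<in> P" "lev s0 = c" using level_nonempty[of c] \<open>\<not> N \<le> c\<close> by auto
  show False
  proof (rule no_retract_above_full_level[OF retract, of c])
    show "c < N" using \<open>\<not> N \<le> c\<close> by simp
    show "{p\<in>P. lev p = c} \<subseteq> Q" using level_c \<open>S \<subseteq> Q\<close> by blast
    fix q assume q: "q \<in> Q" "c < lev q"
    then have "q \<notin> S" using S by auto
    then obtain q' where q': "q' \<in> Q" "incomparable le q q'"
      and sides: "(\<forall>s\<in>S. le s q \<and> le s q') \<or> (\<forall>s\<in>S. le q s \<and> le q' s)"
      using partner q(1) by blast
    have "\<not> le q s0"
    proof
      assume "le q s0"
      moreover have "q \<noteq> s0" using q(2) s0(2) by auto
      ultimately show False using lev_less[of q s0] q QP s0 by auto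
    qed
    then have "\<forall>s\<in>S. le s q \<and> le s q'" using sides s0 level_c by blast
    then show "\<exists>q'\<in>Q. incomparable le q q' \<and> (\<forall>s\<in>P. lev s = c \<longrightarrow> le s q \<and> le s q')"
      using q' level_c by blast
  qed
qed

lemma retract_containing_level_interval_eq:
  assumes retract: "retract P le Q" and S: "S = {p\<in>P. a \<le> lev p \<and> lev p \<le> c}"
    and "a \<le> c" and "c \<le> N" and "S \<subseteq> Q"
    and partner: "\<And>q. q \<in> Q \<Longrightarrow> q \<notin> S \<Longrightarrow> \<exists>q'\<in>Q. incomparable le q q' \<and>
      ((\<forall>s\<in>S. le s q \<and> le s q') \<or> (\<forall>s\<in>S. le q s \<and> le q' s))"
  shows "Q = P"
proof -
  have "N \<le> c" using retract_level_interval_reaches_top[OF retract S \<open>a \<le> c\<close> \<open>S \<subseteq> Q\<close> partner] .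
  txt \<open>In the converse stack the bottom end of the interval becomes the top end.\<close>
  interpret converse: crown_stack P "\<lambda>x y. le y x" "\<lambda>x. N - lev x" N by (rule dual)
  have "a \<le> lev p \<and> lev p \<le> c \<longleftrightarrow> N - c \<le> N - lev p \<and> N - lev p \<le> N - a" if "p \<in> P" for p
    using lev_le_top[OF that] \<open>a \<le> c\<close> \<open>c \<le> N\<close> by auto
  then have S_converse: "S = {p\<in>P. N - c \<le> N - lev p \<and> N - lev p \<le> N - a}" unfolding S by blast
  have partner_converse: "\<exists>q'\<in>Q. incomparable (\<lambda>x y. le y x) q q' \<and>
      ((\<forall>s\<in>S. le q s \<and> le q' s) \<or> (\<forall>s\<in>S. le s q \<and> le s q'))" if "q \<in> Q" "q \<notin> S" for q
    using partner[OF that] unfolding incomparable_def by blast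
  have retract_converse: "retract P (\<lambda>x y. le y x) Q" using retract unfolding retract_def by blast
  have "N \<le> N - a"
    using converse.retract_level_interval_reaches_top[OF retract_converse S_converse
        diff_le_mono2[OF \<open>a \<le> c\<close>] \<open>S \<subseteq> Q\<close> partner_converse] .
  then have "a = 0" "c = N" using \<open>N \<le> c\<close> \<open>a \<le> c\<close> \<open>c \<le> N\<close> by arith+
  then have "S = P" unfolding S using lev_le_top by auto
  then show ?thesis using \<open>S \<subseteq> Q\<close> retract unfolding retract_def by blast
qed

end

lemma six_stack_crown_stack:
  assumes "six_stack P le"
  shows "\<exists>N. crown_stack P le (rank P le) N"
proof -
  obtain n where "n \<ge> 1" and ranked: "ranked_of_rank P le n"
    and crowns: "\<And>i. i < n \<Longrightarrow> order_iso (levels P le i (Suc i)) le crown6 crown6_le"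
    using assms unfolding six_stack_def by blast
  have po: "poset_on P le" using ranked unfolding ranked_of_rank_def by blast
  have "crown_stack P le (rank P le) n"
  proof
    show "poset_on P le" by (rule po)
    show "rank P le x \<le> n" if "x \<in> P" for x using rank_le_if_ranked[OF ranked that] .
    show "card {p\<in>P. rank P le p = i} = 3" if "i \<le> n" for i
    proof (cases "i < n")
      case True
      then show ?thesis using card_lower_level[OF po crowns] by blast
    next
      case False
      then have "i = Suc (n - 1)" "n - 1 < n" using that \<open>n \<ge> 1\<close> by auto
      then show ?thesis using card_upper_level[OF po crowns[of "n - 1"]] by simp
    qed
    show "rank P le x < rank P le y" if "x \<in> P" "y \<in> P" "le x y" "x \<noteq> y" for x y
      using rank_less[OF po that] .
    show "\<exists>!y. y \<in> P \<and> rank P le y = Suc (rank P le x) \<and> \<not> le x y"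
      if "x \<in> P" "rank P le x < n" for x
      using rank_ex1_upper_incomparable[OF po crowns[OF that(2)] that(1)] by simp
    show "\<exists>!x. x \<in> P \<and> Suc (rank P le x) = rank P le y \<and> \<not> le x y"
      if "y \<in> P" "0 < rank P le y" for y
    proof -
      have r: "rank P le y = Suc (rank P le y - 1)" using that(2) by simp
      have "rank P le y - 1 < n" using rank_le_if_ranked[OF ranked that(1)] that(2) by simp
      then have "\<exists>!x. x \<in> P \<and> rank P le x = rank P le y - 1 \<and> \<not> le x y"
        using rank_ex1_lower_incomparable[OF po crowns that(1) r] by blast
      moreover have "(x \<in> P \<and> rank P le x = rank P le y - 1 \<and> \<not> le x y) \<longleftrightarrow>
          (x \<in> P \<and> Suc (rank P le x) = rank P le y \<and> \<not> le x y)" for x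
        using r by auto
      ultimately show ?thesis by simp
    qed
  qed
  then show ?thesis by blast
qed

theorem corollary5p5:
  fixes P Q :: "'a set" and le :: "'a \<Rightarrow> 'a \<Rightarrow> bool"
  assumes "six_stack P le"
    and "retract P le Q" and "Q \<noteq> P"
    and "tower_of_sections Q le"
  shows "four_tower Q le"
proof (rule ccontr)
  assume not_four_tower: "\<not> four_tower Q le"
  obtain S n R where "S \<subseteq> Q" and sec: "section_poset n R"
    and iso: "order_iso S le (section_carrier n) R"
    and partner: "\<And>q. q \<in> Q \<Longrightarrow> q \<notin> S \<Longrightarrow> \<exists>q'\<in>Q. incomparable le q q' \<and>
      ((\<forall>s\<in>S. le s q \<and> le s q') \<or> (\<forall>s\<in>S. le q s \<and> le q' s))"
    using tower_of_sections_section_block[OF assms(4) not_four_tower] by blast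
  obtain N where "crown_stack P le (rank P le) N" using six_stack_crown_stack[OF assms(1)] by blast
  then interpret crown_stack P le "rank P le" N .
  have "S \<subseteq> P" using \<open>S \<subseteq> Q\<close> assms(2) unfolding retract_def by blast
  then obtain a where "a + n \<le> N" and S: "S = {p\<in>P. a \<le> rank P le p \<and> rank P le p \<le> a + n}"
    using section_is_level_interval[OF _ sec iso] by blast
  have "Q = P"
    using retract_containing_level_interval_eq[OF assms(2) S _ \<open>a + n \<le> N\<close> \<open>S \<subseteq> Q\<close> partner] by simp
  with \<open>Q \<noteq> P\<close> show False ..
qed

end
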